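(* For every real $r\ge1$ and every $x\in\mathbb{R}$, \[ f_r(x)\ge 2^{1-r}\sum_{m\ge0}s_m(x)^r, \] with equality when $x=\tfrac12$.
   Context: For $y\in\mathbb{R}$ let $\operatorname{sinc}(y)=\frac{\sin y}{y}$ for $y\neq0$ and $\operatorname{sinc}(0)=1$, and let $h(y)=\operatorname{sinc}^2(\pi y)$. For $r\ge1$, $f_r(x)=\sum_{m\in\mathbb{Z}}h(x+m)^r$, and for integers $m\ge0$, $s_m(x)=h(x+m)+h(x-(m+1))$. *)

theory Defs
  imports "HOL-Analysis.Analysis"
begin

definition sinc :: "real \<Rightarrow> real" where
  "sinc y = (if y = 0 then 1 else sin y / y)"

definition h :: "real \<Rightarrow> real" where
  "h y = (sinc (pi * y))\<^sup>2"

definition f :: "real \<Rightarrow> real \<Rightarrow> real" where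
  "f r x = (\<Sum>\<^sub>\<infinity>m::int. h (x + of_int m) powr r)"

definition s :: "nat \<Rightarrow> real \<Rightarrow> real" where
  "s m x = h (x + real m) + h (x - (real m + 1))"

end

theory Submission
  imports Defs "HOL-Real_Asymp.Real_Asymp"
begin

text \<open>
  Split the lattice \<open>x + \<int>\<close> into the pairs \<open>x + m\<close>, \<open>x - (m + 1)\<close> with \<open>m \<ge> 0\<close>, so that
  \<open>f\<^sub>r(x) = \<Sum>\<^sub>m (h(x + m)\<^sup>r + h(x - (m + 1))\<^sup>r)\<close>. Convexity of \<open>t \<mapsto> t\<^sup>r\<close> gives
  \<open>a\<^sup>r + b\<^sup>r \<ge> 2^(1-r) (a + b)\<^sup>r\<close> termwise, with equality for \<open>a = b\<close>; at \<open>x = 1/2\<close> the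
  two members of each pair are \<open>\<plusminus>(m + 1/2)\<close>, so evenness of \<open>h\<close> makes them equal. Convergence of all
  series comes from \<open>h(y) \<le> 1/y\<^sup>2\<close> and \<open>h\<^sup>r \<le> h\<close>.
\<close>

lemma h_nonneg: "0 \<le> h y"
  unfolding h_def by simp

lemma h_le_1: "h y \<le> 1"
proof -
  have "\<bar>sinc t\<bar> \<le> 1" for t
    unfolding sinc_def using abs_sin_x_le_abs_x[of t]
    by (auto simp: abs_divide divide_le_eq_1)
  then show ?thesis
    unfolding h_def by (metis abs_le_square_iff abs_one one_power2)
qed

lemma h_minus: "h (- y) = h y"
  unfolding h_def sinc_def by auto

lemma h_le_inverse_square:
  assumes "y \<noteq> 0"
  shows "h y \<le> 1 / y\<^sup>2"
proof -
  have "h y = (sin (pi * y))\<^sup>2 / (pi * y)\<^sup>2"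
    unfolding h_def sinc_def using assms by (simp add: power_divide)
  also have "\<dots> \<le> 1 / (pi * y)\<^sup>2"
    by (intro divide_right_mono) (auto simp: abs_square_le_1)
  also have "\<dots> \<le> 1 / y\<^sup>2"
  proof -
    have "y\<^sup>2 \<le> (pi * y)\<^sup>2"
      using pi_gt3 by (simp add: power_mult_distrib mult_le_cancel_right1)
    then show ?thesis
      using assms by (intro divide_left_mono) auto
  qed
  finally show ?thesis .
qed

lemma h_powr_le: "r \<ge> 1 \<Longrightarrow> h y powr r \<le> h y"
  using powr_mono'[of 1 r "h y"] h_nonneg[of y] h_le_1[of y] by simp

lemma summable_h_powr_shift:
  assumes "r \<ge> 1"
  shows "summable (\<lambda>n::nat. h (c + real n) powr r)"
proof (rule summable_comparison_test_ev)
  show "summable (\<lambda>n::nat. 4 * inverse (real n ^ 2))"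
    by (intro summable_mult inverse_power_summable) auto
  have "eventually (\<lambda>n::nat. real n \<ge> 2 * \<bar>c\<bar> + 1) sequentially"
    by real_asymp
  then show "eventually (\<lambda>n. norm (h (c + real n) powr r) \<le> 4 * inverse (real n ^ 2)) sequentially"
  proof eventually_elim
    case (elim n)
    then have n_pos: "real n > 0" and half_le: "real n / 2 \<le> c + real n"
      by linarith+
    have "norm (h (c + real n) powr r) \<le> h (c + real n)"
      using h_powr_le[OF assms] by simp
    also have "\<dots> \<le> 1 / (c + real n)\<^sup>2"
      using n_pos half_le by (intro h_le_inverse_square) linarith
    also have "\<dots> \<le> 1 / (real n / 2)\<^sup>2"
      using n_pos half_le by (intro divide_left_mono power_mono) auto
    also have "\<dots> = 4 * inverse (real n ^ 2)"
      by (simp add: field_simps power2_eq_square)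
    finally show ?case .
  qed
qed

lemma powr_mean_two_le:
  fixes a b r :: real
  assumes "a \<ge> 0" "b \<ge> 0" "r \<ge> 1"
  shows "2 powr (1 - r) * (a + b) powr r \<le> a powr r + b powr r"
proof (cases "a = 0 \<or> b = 0")
  case True
  have "2 powr (1 - r) \<le> 1"
    using assms powr_mono[of "1 - r" 0 2] by simp
  then show ?thesis
    using True by (auto simp: mult_left_le_one_le)
next
  case False
  then have "((1 - 1/2) *\<^sub>R a + (1/2) *\<^sub>R b) powr r \<le> (1 - 1/2) * a powr r + (1/2) * b powr r"
    using assms by (intro convex_onD[OF powr_convex[OF assms(3)]]) auto
  then have "2 * ((a + b) / 2) powr r \<le> a powr r + b powr r"
    by (simp add: field_simps)
  moreover have "2 * ((a + b) / 2) powr r = 2 powr (1 - r) * (a + b) powr r"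
    using assms by (simp add: powr_divide powr_diff)
  ultimately show ?thesis
    by simp
qed

lemma powr_mean_two_eq:
  fixes a r :: real
  assumes "a \<ge> 0"
  shows "2 powr (1 - r) * (a + a) powr r = a powr r + a powr r"
proof -
  have "2 powr (1 - r) * (a + a) powr r = 2 powr (1 - r) * 2 powr r * a powr r"
    using assms by (simp add: powr_mult)
  also have "\<dots> = a powr r + a powr r"
    by (simp add: powr_add[symmetric])
  finally show ?thesis .
qed

lemma int_eq_range_nonneg_Un_range_neg:
  "(UNIV :: int set) = range int \<union> range (\<lambda>n. - int n - 1)"
proof -
  have "k \<in> range int \<union> range (\<lambda>n. - int n - 1)" for k :: int
  proof (cases "k \<ge> 0")
    case True
    then show ?thesis by (metis UnI1 rangeI zero_le_imp_eq_int)
  next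
    case False
    then have "k = - int (nat (- k - 1)) - 1" by simp
    then show ?thesis by (metis UnI2 rangeI)
  qed
  then show ?thesis by auto
qed

lemma infsum_int_split_nat:
  fixes g :: "int \<Rightarrow> real"
  assumes nonneg: "(\<lambda>n. g (int n)) summable_on UNIV"
    and neg: "(\<lambda>n. g (- int n - 1)) summable_on UNIV"
  shows "infsum g UNIV = (\<Sum>\<^sub>\<infinity>n::nat. g (int n) + g (- int n - 1))"
proof -
  have inj_nonneg: "inj int" and inj_neg: "inj (\<lambda>n::nat. - int n - 1)"
    by (simp_all add: inj_def)
  have "g summable_on range int"
    using nonneg summable_on_reindex[OF inj_nonneg, of g] by (simp add: o_def)
  moreover have "g summable_on range (\<lambda>n. - int n - 1)"
    using neg summable_on_reindex[OF inj_neg, of g] by (simp add: o_def)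
  moreover have "range int \<inter> range (\<lambda>n::nat. - int n - 1) = {}"
    by auto
  ultimately have "infsum g UNIV = infsum g (range int) + infsum g (range (\<lambda>n. - int n - 1))"
    by (subst int_eq_range_nonneg_Un_range_neg) (rule infsum_Un_disjoint)
  also have "\<dots> = (\<Sum>\<^sub>\<infinity>n::nat. g (int n)) + (\<Sum>\<^sub>\<infinity>n::nat. g (- int n - 1))"
    by (simp add: infsum_reindex[OF inj_nonneg] infsum_reindex[OF inj_neg] o_def)
  also have "\<dots> = (\<Sum>\<^sub>\<infinity>n::nat. g (int n) + g (- int n - 1))"
    by (rule infsum_add[OF nonneg neg, symmetric])
  finally show ?thesis .
qed

lemma summable_on_h_powr_pairs:
  assumes "r \<ge> 1"
  shows "(\<lambda>n::nat. h (x + real n) powr r) summable_on UNIV"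
    and "(\<lambda>n::nat. h (x - (real n + 1)) powr r) summable_on UNIV"
proof -
  have "h (x - (real n + 1)) = h ((1 - x) + real n)" for n
    using h_minus[of "(1 - x) + real n"] by (simp add: algebra_simps)
  then show "(\<lambda>n::nat. h (x - (real n + 1)) powr r) summable_on UNIV"
       and "(\<lambda>n::nat. h (x + real n) powr r) summable_on UNIV"
    using summable_h_powr_shift[OF assms] by (simp_all add: summable_on_UNIV_nonneg_real_iff)
qed

lemma f_eq_infsum_pairs:
  assumes "r \<ge> 1"
  shows "f r x = (\<Sum>\<^sub>\<infinity>n::nat. h (x + real n) powr r + h (x - (real n + 1)) powr r)"
proof -
  have "h (x + of_int (- int n - 1)) = h (x - (real n + 1))" for n
    by (simp add: algebra_simps)
  then show ?thesis
    unfolding f_def using summable_on_h_powr_pairs[OF assms, of x]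
    by (subst infsum_int_split_nat) simp_all
qed

lemma f_ge_infsum_s_powr:
  assumes r: "r \<ge> 1"
  shows "2 powr (1 - r) * (\<Sum>\<^sub>\<infinity>m::nat. s m x powr r) \<le> f r x"
proof -
  let ?pair = "\<lambda>m::nat. h (x + real m) powr r + h (x - (real m + 1)) powr r"
  have le: "2 powr (1 - r) * s m x powr r \<le> ?pair m" for m
    unfolding s_def by (rule powr_mean_two_le[OF h_nonneg h_nonneg r])
  have pair_summable: "?pair summable_on UNIV"
    using summable_on_add[OF summable_on_h_powr_pairs[OF r]] .
  have "2 powr (1 - r) * (\<Sum>\<^sub>\<infinity>m::nat. s m x powr r) = (\<Sum>\<^sub>\<infinity>m::nat. 2 powr (1 - r) * s m x powr r)"
    by (rule infsum_cmult_right'[symmetric])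
  also have "\<dots> \<le> (\<Sum>\<^sub>\<infinity>m::nat. ?pair m)"
    by (rule infsum_mono[OF summable_on_comparison_test[OF pair_summable] pair_summable le])
       (use le in auto)
  also have "\<dots> = f r x"
    by (rule f_eq_infsum_pairs[OF r, symmetric])
  finally show ?thesis .
qed

lemma f_half_eq_infsum_s_powr:
  assumes r: "r \<ge> 1"
  shows "f r (1/2) = 2 powr (1 - r) * (\<Sum>\<^sub>\<infinity>m::nat. s m (1/2) powr r)"
proof -
  have mirror: "h (1/2 - (real m + 1)) = h (1/2 + real m)" for m
    using h_minus[of "1/2 + real m"] by (simp add: algebra_simps)
  have "h (1/2 + real m) powr r + h (1/2 - (real m + 1)) powr r = 2 powr (1 - r) * s m (1/2) powr r"
    for m
    unfolding s_def mirror by (rule powr_mean_two_eq[OF h_nonneg, symmetric])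
  then have "f r (1/2) = (\<Sum>\<^sub>\<infinity>m::nat. 2 powr (1 - r) * s m (1/2) powr r)"
    by (simp add: f_eq_infsum_pairs[OF r])
  also have "\<dots> = 2 powr (1 - r) * (\<Sum>\<^sub>\<infinity>m::nat. s m (1/2) powr r)"
    by (rule infsum_cmult_right')
  finally show ?thesis .
qed

theorem mainTheorem6:
  shows "\<forall>r::real. r \<ge> 1 \<longrightarrow>
           (\<forall>x::real. f r x \<ge> 2 powr (1 - r) * (\<Sum>\<^sub>\<infinity>m::nat. s m x powr r))
         \<and> f r (1/2) = 2 powr (1 - r) * (\<Sum>\<^sub>\<infinity>m::nat. s m (1/2) powr r)"
  using f_ge_infsum_s_powr f_half_eq_infsum_s_powr by blast

end
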